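(* Let $\theta_1,\theta_2>0$, $\theta=\theta_1+\theta_2$, $p=\theta_1/\theta$, and let \[ \mathcal{L}g(x)=x\big(g(1)-g(x)\big)+(1-x)\big(g(0)-g(x)\big)+\tfrac12(\theta_1-\theta x)g'(x). \] The eigenvalues of $\mathcal{L}$ (acting on polynomials) are $\lambda_0=0$, $\lambda_1=\theta/2$ and $\lambda_n=1+n\theta/2$ for $n\ge 2$. The corresponding right eigenvectors are monic polynomials $P_n$ with $\mathcal{L}P_n=-\lambda_nP_n$, given by $P_0(x)=1$, $P_1(x)=x-p$, and for $n\ge2$ \[ P_n(x)=(x-p)^n+c_{n1}(x-p)+c_{n0}, \] where \[ c_{n0}=-\frac{2/\theta}{n+2/\theta}\Big[p(1-p)^n+(1-p)(-p)^n\Big],\qquad c_{n1}=\frac{2/\theta}{n-1+2/\theta}\Big[(-p)^n-(1-p)^n\Big]. \]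
   Context: $\mathcal{L}$ is the generator of the two-type star-shaped $\Lambda$-Fleming–Viot process with mutation (whole-population replacement at rate 1, mutation at rate $\theta/2$ along lines with new type 1 with probability $p$). *)

theory Defs
  imports "HOL-Computational_Algebra.Polynomial"
begin

definition gen :: "real \<Rightarrow> real \<Rightarrow> real poly \<Rightarrow> real poly" where
  "gen th1 th2 g =
     [:0, 1:] * ([:poly g 1:] - g)
   + [:1, -1:] * ([:poly g 0:] - g)
   + smult (1/2) ([:th1, -(th1 + th2):] * pderiv g)"

definition lam :: "real \<Rightarrow> nat \<Rightarrow> real" where
  "lam th n = (if n = 0 then 0 else if n = 1 then th / 2 else 1 + real n * th / 2)"

definition c0 :: "real \<Rightarrow> real \<Rightarrow> nat \<Rightarrow> real" where
  "c0 th p n = - ((2/th) / (real n + 2/th)) * (p * (1 - p)^n + (1 - p) * (-p)^n)"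

definition c1 :: "real \<Rightarrow> real \<Rightarrow> nat \<Rightarrow> real" where
  "c1 th p n = ((2/th) / (real n - 1 + 2/th)) * ((-p)^n - (1 - p)^n)"

definition Pn :: "real \<Rightarrow> real \<Rightarrow> nat \<Rightarrow> real poly" where
  "Pn th1 th2 n =
    (let th = th1 + th2; p = th1 / th in
     if n = 0 then 1
     else if n = 1 then [:-p, 1:]
     else [:-p, 1:] ^ n + smult (c1 th p n) [:-p, 1:] + [:c0 th p n:])"

end

theory Submission imports Defs begin

text \<open>The generator does not raise degrees, and on the top coefficient of a polynomial of
degree d it acts as multiplication by -lam d. Hence the eigenvalue of an eigenvector is
lam of its degree. Since lam is injective for theta > 0, subtracting from an eigenvector the
multiple of the monic one of the same degree that kills the top coefficient leaves an
eigenvector of smaller degree for the same eigenvalue, which must therefore vanish.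
That P_n is an eigenvector is a computation in powers of x - p: the generator sends
(x - p)^n to -lam n (x - p)^n plus an affine polynomial, and c_n1, c_n0 are exactly the coefficients
that cancel this affine remainder.\<close>

lemma coeff_gen:
  "coeff (gen th1 th2 g) k =
     (if k = 0 then poly g 0 else 0) + (if k = 1 then poly g 1 - poly g 0 else 0) - coeff g k
     + th1 / 2 * real (Suc k) * coeff g (Suc k) - (th1 + th2) / 2 * real k * coeff g k"
  unfolding gen_def
  by (cases k) (auto simp: coeff_pderiv algebra_simps mult_pCons_left coeff_pCons field_simps
      split: nat.split)

lemma gen_smult: "gen th1 th2 (smult c g) = smult c (gen th1 th2 g)"
  by (intro poly_eqI) (simp add: coeff_gen field_simps)

lemma gen_diff: "gen th1 th2 (f - g) = gen th1 th2 f - gen th1 th2 g"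
  by (intro poly_eqI) (simp add: coeff_gen field_simps)

lemma coeff_gen_degree:
  "coeff (gen th1 th2 g) (degree g) = - lam (th1 + th2) (degree g) * lead_coeff g"
proof -
  have above: "coeff g (Suc (degree g)) = 0" by (simp add: coeff_eq_0)
  consider "degree g = 0" | "degree g = 1" | "degree g \<ge> 2" by linarith
  then show ?thesis
  proof cases
    case 1
    then show ?thesis using above by (simp add: coeff_gen lam_def poly_0_coeff_0)
  next
    case 2
    then have "poly g 1 = coeff g 0 + coeff g 1" by (simp add: poly_altdef)
    then show ?thesis using 2 above by (simp add: coeff_gen lam_def poly_0_coeff_0 field_simps)
  next
    case 3
    then show ?thesis using above by (simp add: coeff_gen lam_def field_simps)
  qed
qed

lemma eigenvalue_eq_lam_degree:
  assumes "g \<noteq> 0" and "gen th1 th2 g = smult (- mu) g"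
  shows "mu = lam (th1 + th2) (degree g)"
  using coeff_gen_degree[of th1 th2 g] assms by simp

lemma inj_lam:
  assumes "th > 0"
  shows "inj (lam th)"
proof (rule injI)
  fix m n assume eq: "lam th m = lam th n"
  have big: "lam th k > th" if "k \<ge> 2" for k
  proof -
    have "real k * th \<ge> 2 * th" using that assms by (intro mult_right_mono) auto
    moreover have "lam th k = 1 + real k * th / 2" using that by (simp add: lam_def)
    ultimately show ?thesis by linarith
  qed
  consider "m \<le> 1" "n \<le> 1" | "m \<ge> 2" "n \<ge> 2" | "m \<le> 1 \<and> n \<ge> 2 \<or> m \<ge> 2 \<and> n \<le> 1"
    by linarith
  then show "m = n"
  proof cases
    case 1
    then show ?thesis using eq assms by (auto simp: lam_def le_Suc_eq)
  next
    case 2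
    then show ?thesis using eq assms by (simp add: lam_def)
  next
    case 3
    then show ?thesis using eq big[of m] big[of n] assms by (auto simp: lam_def le_Suc_eq)
  qed
qed

lemma eigenspace_spanned:
  assumes "th1 + th2 > 0"
    and "degree P = n" and "lead_coeff P = 1"
    and P: "gen th1 th2 P = smult (- lam (th1 + th2) n) P"
    and g: "gen th1 th2 g = smult (- lam (th1 + th2) n) g"
  shows "g = smult (coeff g n) P"
proof (rule ccontr)
  define h where "h = g - smult (coeff g n) P"
  assume "g \<noteq> smult (coeff g n) P"
  then have "h \<noteq> 0" by (simp add: h_def)
  moreover have "gen th1 th2 h = smult (- lam (th1 + th2) n) h"
    using P g by (simp add: h_def gen_diff gen_smult smult_diff_right mult.commute)
  ultimately have "lam (th1 + th2) (degree h) = lam (th1 + th2) n"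
    using eigenvalue_eq_lam_degree by metis
  then have "degree h = n" using inj_lam[OF assms(1)] by (simp add: inj_eq)
  moreover have "coeff h n = 0" using assms(2,3) by (simp add: h_def)
  ultimately show False using \<open>h \<noteq> 0\<close> by (metis leading_coeff_0_iff)
qed

text \<open>With p = th1 / (th1 + th2), the drift th1/2 - th x/2 is -(th/2)(x - p).\<close>

lemma gen_shifted:
  assumes "th1 + th2 \<noteq> 0"
  shows "gen th1 th2 g = [:poly g 0, poly g 1 - poly g 0:] - g
           - smult ((th1 + th2) / 2) ([:- th1 / (th1 + th2), 1:] * pderiv g)"
  using assms
  by (intro poly_eqI) (auto simp: coeff_gen coeff_pderiv mult_pCons_left coeff_pCons field_simps
      split: nat.split)

lemma c1_identity:
  assumes "th > 0" and "n \<ge> 1"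
  shows "(1 + (real n - 1) * th / 2) * c1 th p n = (-p) ^ n - (1 - p) ^ n"
proof -
  have "real n - 1 + 2 / th > 0" using assms by (simp add: add_nonneg_pos)
  then show ?thesis using assms by (simp add: c1_def field_simps)
qed

lemma c0_identity:
  assumes "th > 0"
  shows "(1 + real n * th / 2) * c0 th p n = - (p * (1 - p) ^ n + (1 - p) * (-p) ^ n)"
proof -
  have "real n + 2 / th > 0" using assms by (simp add: add_nonneg_pos)
  then show ?thesis using assms by (simp add: c0_def field_simps)
qed

lemma degree_Pn: "degree (Pn th1 th2 n) = n" and lead_coeff_Pn: "lead_coeff (Pn th1 th2 n) = 1"
proof -
  define p where "p = th1 / (th1 + th2)"
  define q where "q = [:- p, 1 :: real:]"
  define r where "r = smult (c1 (th1 + th2) p n) q + [:c0 (th1 + th2) p n:]"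
  have "degree (Pn th1 th2 n) = n \<and> lead_coeff (Pn th1 th2 n) = 1"
  proof (cases "n \<ge> 2")
    case True
    have Pn: "Pn th1 th2 n = q ^ n + r" using True by (simp add: Pn_def Let_def p_def q_def r_def)
    have "degree r \<le> 1" unfolding r_def q_def
      by (rule degree_add_le) (simp_all add: degree_smult_eq)
    moreover have "degree (q ^ n) = n" by (simp add: q_def degree_power_eq)
    moreover have "coeff (q ^ n) n = 1"
      using lead_coeff_power[of q n] \<open>degree (q ^ n) = n\<close> by (simp add: q_def)
    ultimately show ?thesis using True unfolding Pn
      by (simp add: degree_add_eq_left coeff_eq_0)
  qed (auto simp: Pn_def Let_def le_Suc_eq)
  then show "degree (Pn th1 th2 n) = n" "lead_coeff (Pn th1 th2 n) = 1" by blast+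
qed

lemma gen_Pn_high:
  assumes "th1 + th2 > 0" and "n \<ge> 2"
  shows "gen th1 th2 (Pn th1 th2 n) = smult (- lam (th1 + th2) n) (Pn th1 th2 n)"
proof -
  define th where "th = th1 + th2"
  define p where "p = th1 / th"
  define q where "q = [:- p, 1 :: real:]"
  define C1 where "C1 = c1 th p n"
  define C0 where "C0 = c0 th p n"
  define A where "A = (- p) ^ n"
  define B where "B = (1 - p) ^ n"
  define g where "g = q ^ n + smult C1 q + [:C0:]"
  have th: "th > 0" using assms by (simp add: th_def)
  have lam: "lam th n = 1 + real n * th / 2" using assms by (simp add: lam_def)
  have Pn: "Pn th1 th2 n = g" using assms
    by (simp add: Pn_def Let_def th_def p_def q_def C1_def C0_def g_def)
  have g0: "poly g 0 = A - C1 * p + C0" by (simp add: g_def q_def A_def)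
  have g1: "poly g 1 - poly g 0 = B - A + C1" by (simp add: g_def q_def A_def B_def algebra_simps)
  have "q * q ^ (n - 1) = q ^ n" using assms by (cases n) auto
  then have q_deriv: "q * pderiv g = smult (real n) (q ^ n) + smult C1 q"
    by (simp add: g_def q_def pderiv_add pderiv_smult pderiv_power pderiv_pCons algebra_simps)
  have affine: "[:poly g 0, poly g 1 - poly g 0:] = smult (B - A + C1) q + [:(1 - p) * A + p * B + C0:]"
    by (subst g1, subst g0) (simp add: q_def algebra_simps)
  have "gen th1 th2 g = [:poly g 0, poly g 1 - poly g 0:] - g - smult (th / 2) (q * pderiv g)"
    using gen_shifted[of th1 th2 g] th by (simp add: th_def p_def q_def)
  also have "\<dots> = smult (- lam th n) (q ^ n) + smult (B - A - th / 2 * C1) q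
                  + [:(1 - p) * A + p * B:]"
    unfolding affine q_deriv lam
    by (simp add: g_def smult_add_right smult_diff_right smult_add_left smult_diff_left algebra_simps)
  also have "\<dots> = smult (- lam th n) g"
  proof -
    have "B - A - th / 2 * C1 = - lam th n * C1"
      using c1_identity[OF th, of n p] assms
      by (simp add: lam C1_def A_def B_def algebra_simps diff_divide_distrib)
    moreover have "(1 - p) * A + p * B = - lam th n * C0"
      using c0_identity[OF th, of n p] by (simp add: lam C0_def A_def B_def algebra_simps)
    ultimately show ?thesis by (simp add: g_def smult_add_right)
  qed
  finally show ?thesis using Pn by (simp add: th_def)
qed

lemma gen_Pn:
  assumes "th1 + th2 > 0"
  shows "gen th1 th2 (Pn th1 th2 n) = smult (- lam (th1 + th2) n) (Pn th1 th2 n)"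
proof -
  consider "n = 0" | "n = 1" | "n \<ge> 2" by linarith
  then show ?thesis
  proof cases
    case 1
    then show ?thesis by (simp add: Pn_def lam_def gen_def one_pCons)
  next
    case 2
    then show ?thesis using gen_shifted[of th1 th2 "Pn th1 th2 n"] assms
      by (simp add: Pn_def lam_def pderiv_pCons)
  next
    case 3
    then show ?thesis using gen_Pn_high[OF assms] by simp
  qed
qed

theorem theorem2:
  fixes th1 th2 :: real
  assumes "th1 > 0" and "th2 > 0"
  shows "{mu. \<exists>g. g \<noteq> 0 \<and> gen th1 th2 g = smult (- mu) g} = range (lam (th1 + th2))
       \<and> (\<forall>n. degree (Pn th1 th2 n) = n \<and> lead_coeff (Pn th1 th2 n) = 1
              \<and> gen th1 th2 (Pn th1 th2 n) = smult (- lam (th1 + th2) n) (Pn th1 th2 n)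
              \<and> (\<forall>g. gen th1 th2 g = smult (- lam (th1 + th2) n) g
                      \<longrightarrow> (\<exists>c. g = smult c (Pn th1 th2 n))))"
proof -
  have th: "th1 + th2 > 0" using assms by simp
  have "Pn th1 th2 n \<noteq> 0" for n using lead_coeff_Pn[of th1 th2 n] by auto
  then have spectrum: "{mu. \<exists>g. g \<noteq> 0 \<and> gen th1 th2 g = smult (- mu) g} = range (lam (th1 + th2))"
    using eigenvalue_eq_lam_degree gen_Pn[OF th] by blast
  have "g = smult (coeff g n) (Pn th1 th2 n)"
    if "gen th1 th2 g = smult (- lam (th1 + th2) n) g" for g n
    using eigenspace_spanned[OF th degree_Pn lead_coeff_Pn gen_Pn[OF th] that] .
  then show ?thesis using spectrum degree_Pn lead_coeff_Pn gen_Pn[OF th] by blast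
qed

end
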